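(* Fix $p\in(\tfrac12,1)$. For each $n$ and $B\in\{1,\dots,n\}$ let $R(B,n)$ be the market penetration index of the crowdfunding game $\Gamma(B,n)$ (defined in the context). Then $$\lim_{n\to\infty}\ \max_{B\in\{1,\dots,n\}}R(B,n)=\frac{1}{2p}.$$
   Context: The crowdfunding game $\Gamma(B,n)$ with parameter $p\in(\tfrac12,1)$: there are $n$ players and a threshold $B\in\{1,\dots,n\}$. A state $\omega\in\{H,L\}$ is drawn with probability $\tfrac12$ each. Conditional on $\omega$, each player $i$ independently receives a signal $s_i\in\{H,L\}$ with $\Pr(s_i=\omega\mid\omega)=p$. Players simultaneously choose $a_i\in\{0,1\}$. Player $i$'s payoff is $1$ if $a_i=1$, $\sum_j a_j\ge B$ and $\omega=H$; $-1$ if $a_i=1$, $\sum_j a_j\ge B$ and $\omega=L$; and $0$ otherwise. A strategy is a map $\sigma_i:\{H,L\}\to[0,1]$ giving the probability of action $1$ after each signal; Bayes-Nash equilibrium is defined as usual. A profile is non-trivial if $\Pr_\sigma(\sum_i a_i\ge B)>0$, and symmetric if all players use the same strategy. It is known that each $\Gamma(B,n)$ has a unique symmetric non-trivial Bayes-Nash equilibrium $\sigma$. The market penetration index is $R(B,n)=E_\sigma\big[\tfrac{1}{n}\big(\sum_{i=1}^n a_i\big)\,\chi\big(\sum_{i=1}^n a_i\ge B\big)\big]$, where $\chi$ is the indicator function and the expectation is under this unique equilibrium $\sigma$ (including the randomness of $\omega$ and the signals). *)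

theory Defs
  imports Complex_Main "HOL-Library.FuncSet"
begin

text \<open>Crowdfunding game Gamma(B,n) with signal precision p.
  States and signals are encoded as bool: True = H, False = L.
  Players are 0,...,n-1. A (mixed) strategy maps a signal to the
  probability of playing action 1.\<close>

type_synonym strategy = "bool \<Rightarrow> real"

definition valid_strategy :: "strategy \<Rightarrow> bool" where
  "valid_strategy \<sigma> \<longleftrightarrow> (\<forall>s. 0 \<le> \<sigma> s \<and> \<sigma> s \<le> 1)"

definition profiles :: "nat \<Rightarrow> (nat \<Rightarrow> bool) set" where
  "profiles n = Pi\<^sub>E {..<n} (\<lambda>_. UNIV)"

definition outcome_prob ::
  "real \<Rightarrow> nat \<Rightarrow> (nat \<Rightarrow> strategy) \<Rightarrow> bool \<Rightarrow> (nat \<Rightarrow> bool) \<Rightarrow> (nat \<Rightarrow> bool) \<Rightarrow> real" where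
  "outcome_prob p n sig w s a =
     1/2 * (\<Prod>i<n. if s i = w then p else 1 - p)
         * (\<Prod>i<n. if a i then sig i (s i) else 1 - sig i (s i))"

definition expect ::
  "real \<Rightarrow> nat \<Rightarrow> (nat \<Rightarrow> strategy) \<Rightarrow> (bool \<Rightarrow> (nat \<Rightarrow> bool) \<Rightarrow> (nat \<Rightarrow> bool) \<Rightarrow> real) \<Rightarrow> real" where
  "expect p n sig f =
     (\<Sum>w\<in>(UNIV::bool set). \<Sum>s\<in>profiles n. \<Sum>a\<in>profiles n. outcome_prob p n sig w s a * f w s a)"

definition num_act :: "nat \<Rightarrow> (nat \<Rightarrow> bool) \<Rightarrow> nat" where
  "num_act n a = card {i. i < n \<and> a i}"

definition payoff :: "nat \<Rightarrow> nat \<Rightarrow> nat \<Rightarrow> bool \<Rightarrow> (nat \<Rightarrow> bool) \<Rightarrow> real" where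
  "payoff B n i w a =
     (if a i \<and> B \<le> num_act n a then (if w then 1 else -1) else 0)"

text \<open>Bayes-Nash equilibrium (ex-ante formulation; since every signal has
  positive probability, this is equivalent to interim optimality).\<close>
definition is_BNE :: "real \<Rightarrow> nat \<Rightarrow> nat \<Rightarrow> (nat \<Rightarrow> strategy) \<Rightarrow> bool" where
  "is_BNE p B n sig \<longleftrightarrow>
     (\<forall>i<n. valid_strategy (sig i)) \<and>
     (\<forall>i<n. \<forall>\<tau>. valid_strategy \<tau> \<longrightarrow>
        expect p n (sig(i := \<tau>)) (\<lambda>w s a. payoff B n i w a)
          \<le> expect p n sig (\<lambda>w s a. payoff B n i w a))"

definition nontrivial :: "real \<Rightarrow> nat \<Rightarrow> nat \<Rightarrow> (nat \<Rightarrow> strategy) \<Rightarrow> bool" where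
  "nontrivial p B n sig \<longleftrightarrow>
     expect p n sig (\<lambda>w s a. if B \<le> num_act n a then 1 else 0) > 0"

text \<open>The unique symmetric non-trivial BNE (all players use the same strategy).\<close>
definition sym_eq :: "real \<Rightarrow> nat \<Rightarrow> nat \<Rightarrow> strategy" where
  "sym_eq p B n = (THE \<tau>. valid_strategy \<tau> \<and> is_BNE p B n (\<lambda>_. \<tau>) \<and> nontrivial p B n (\<lambda>_. \<tau>))"

definition R :: "real \<Rightarrow> nat \<Rightarrow> nat \<Rightarrow> real" where
  "R p B n = expect p n (\<lambda>_. sym_eq p B n)
     (\<lambda>w s a. real (num_act n a) / real n * (if B \<le> num_act n a then 1 else 0))"

end

(*
  In the unique symmetric equilibrium every player invests after a high signal, and after a low
  signal with the probability y that makes a low-signal player indifferent (or y = 0 if even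
  y = 0 makes investing unprofitable).  Writing T(q) for the probability that at least B - 1 of
  the other n - 1 players invest when each does so with probability q, indifference reads
  (1 - p) T(q_H) = p T(q_L) with q_H = p + (1 - p) y and q_L = 1 - p + p y; it has at most one
  solution because T(q_H)/T(q_L) is strictly decreasing in y.

  Substituting the indifference condition into R = (q_H T(q_H) + q_L T(q_L))/2 gives
  R = T(q_H) (p q_H + (1 - p) q_L) / (2p) <= 1/(2p).  Conversely, for B = n - K with K of
  order sqrt n, Chebyshev's inequality forces y >= 1 - 2K/(n - 1), hence T(q_H) >= 1 - O(1/K)
  and R >= 1/(2p) - o(1).
*)

theory Submission
  imports Defs "HOL-Real_Asymp.Real_Asymp"
begin

section \<open>Binomial expectations and tails\<close>

definition binom_expect :: "nat \<Rightarrow> real \<Rightarrow> (nat \<Rightarrow> real) \<Rightarrow> real" where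
  "binom_expect m q h = (\<Sum>k\<le>m. real (m choose k) * q^k * (1-q)^(m-k) * h k)"

lemma binom_expect_0 [simp]: "binom_expect 0 q h = h 0"
  by (simp add: binom_expect_def)

lemma binom_expect_Suc:
  "binom_expect (Suc m) q h = q * binom_expect m q (\<lambda>k. h (Suc k)) + (1-q) * binom_expect m q h"
proof -
  define A where "A k = real (m choose k) * q^k * (1-q)^(Suc m - k) * h k" for k
  define C where "C k = (if k = 0 then 0 else real (m choose (k-1)) * q^k * (1-q)^(Suc m - k) * h k)" for k
  have A: "(1-q) * binom_expect m q h = (\<Sum>k\<le>Suc m. A k)"
  proof -
    have "(1-q) * binom_expect m q h = (\<Sum>k\<le>m. A k)"
      unfolding binom_expect_def A_def sum_distrib_left
      by (rule sum.cong) (auto simp: Suc_diff_le mult_ac)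
    also have "\<dots> = (\<Sum>k\<le>Suc m. A k)" by (simp add: A_def)
    finally show ?thesis .
  qed
  have C: "q * binom_expect m q (\<lambda>k. h (Suc k)) = (\<Sum>k\<le>Suc m. C k)"
  proof -
    have "q * binom_expect m q (\<lambda>k. h (Suc k)) = (\<Sum>k\<le>m. C (Suc k))"
      unfolding binom_expect_def C_def sum_distrib_left
      by (rule sum.cong) (auto simp: mult_ac)
    also have "\<dots> = (\<Sum>k\<le>Suc m. C k)" by (subst sum.atMost_Suc_shift) (simp add: C_def)
    finally show ?thesis .
  qed
  have "binom_expect (Suc m) q h = (\<Sum>k\<le>Suc m. A k + C k)"
    unfolding binom_expect_def
  proof (rule sum.cong[OF refl])
    fix k
    show "real (Suc m choose k) * q ^ k * (1 - q) ^ (Suc m - k) * h k = A k + C k"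
      by (cases k) (simp_all add: A_def C_def algebra_simps)
  qed
  then show ?thesis using A C by (simp add: sum.distrib)
qed

lemma binom_expect_cong:
  "(\<And>k. k \<le> m \<Longrightarrow> h k = g k) \<Longrightarrow> binom_expect m q h = binom_expect m q g"
  unfolding binom_expect_def by (rule sum.cong) auto

lemma binom_expect_cmult: "binom_expect m q (\<lambda>k. c * h k) = c * binom_expect m q h"
  unfolding binom_expect_def sum_distrib_left by (rule sum.cong) auto

lemma binom_expect_add:
  "binom_expect m q (\<lambda>k. h k + g k) = binom_expect m q h + binom_expect m q g"
  unfolding binom_expect_def by (simp add: distrib_left sum.distrib)

lemma binom_expect_diff:
  "binom_expect m q (\<lambda>k. h k - g k) = binom_expect m q h - binom_expect m q g"
  unfolding binom_expect_def by (simp add: right_diff_distrib sum_subtractf)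

lemma binom_expect_const [simp]: "binom_expect m q (\<lambda>_. c) = c"
proof -
  have "binom_expect m q (\<lambda>_. 1) = 1"
    by (induction m) (simp_all add: binom_expect_Suc)
  then show ?thesis using binom_expect_cmult[of m q c "\<lambda>_. 1"] by simp
qed

lemma binom_expect_mono:
  "0 \<le> q \<Longrightarrow> q \<le> 1 \<Longrightarrow> (\<And>k. k \<le> m \<Longrightarrow> h k \<le> g k) \<Longrightarrow> binom_expect m q h \<le> binom_expect m q g"
  unfolding binom_expect_def by (intro sum_mono mult_left_mono) auto

lemma binom_expect_mean: "binom_expect m q real = real m * q"
proof (induction m)
  case (Suc m)
  have "binom_expect m q (\<lambda>k. real (Suc k)) = real m * q + 1"
    using binom_expect_add[of m q "\<lambda>_. 1" real] Suc by (simp add: add.commute)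
  then show ?case using Suc by (simp add: binom_expect_Suc algebra_simps)
qed simp

lemma binom_expect_square:
  "binom_expect m q (\<lambda>k. (real k)^2) = real m * q + real m * (real m - 1) * q^2"
proof (induction m)
  case (Suc m)
  have "binom_expect m q (\<lambda>k. (real (Suc k))^2)
      = binom_expect m q (\<lambda>k. (real k)^2 + (2 * real k + 1))"
    by (simp add: power2_eq_square algebra_simps)
  also have "\<dots> = binom_expect m q (\<lambda>k. (real k)^2) + 2 * binom_expect m q real + 1"
    by (simp add: binom_expect_add binom_expect_cmult)
  finally show ?case
    using Suc by (simp add: binom_expect_Suc binom_expect_mean power2_eq_square algebra_simps)
qed simp

lemma binom_expect_variance:
  "binom_expect m q (\<lambda>k. (real k - real m * q)^2) = real m * q * (1 - q)"
proof -
  have "binom_expect m q (\<lambda>k. (real k - real m * q)^2)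
      = binom_expect m q (\<lambda>k. (real k)^2 - (2 * real m * q) * real k + (real m * q)^2)"
    by (rule binom_expect_cong) (simp add: power2_diff algebra_simps)
  also have "\<dots> = binom_expect m q (\<lambda>k. (real k)^2) - (2 * real m * q) * binom_expect m q real
      + (real m * q)^2"
    by (simp add: binom_expect_add binom_expect_diff binom_expect_cmult)
  also have "\<dots> = real m * q * (1 - q)"
    unfolding binom_expect_square binom_expect_mean by (simp add: power2_eq_square algebra_simps)
  finally show ?thesis .
qed

lemma binom_expect_times_index:
  "binom_expect (Suc m) q (\<lambda>k. real k * h k) = real (Suc m) * q * binom_expect m q (\<lambda>k. h (Suc k))"
proof (induction m arbitrary: h)
  case 0
  then show ?case by (simp add: binom_expect_Suc)
next
  case (Suc m)
  have "binom_expect (Suc (Suc m)) q (\<lambda>k. real k * h k)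
      = q * binom_expect (Suc m) q (\<lambda>k. h (Suc k) + real k * h (Suc k))
        + (1-q) * binom_expect (Suc m) q (\<lambda>k. real k * h k)"
    by (simp add: binom_expect_Suc algebra_simps)
  also have "\<dots> = q * binom_expect (Suc m) q (\<lambda>k. h (Suc k))
      + q * (real (Suc m) * q * binom_expect m q (\<lambda>k. h (Suc (Suc k))))
      + (1-q) * (real (Suc m) * q * binom_expect m q (\<lambda>k. h (Suc k)))"
    using Suc[of "\<lambda>k. h (Suc k)"] Suc[of h] by (simp add: binom_expect_add distrib_left)
  also have "\<dots> = real (Suc (Suc m)) * q * binom_expect (Suc m) q (\<lambda>k. h (Suc k))"
    by (simp add: binom_expect_Suc algebra_simps)
  finally show ?case .
qed

definition binom_lower_tail :: "nat \<Rightarrow> nat \<Rightarrow> real \<Rightarrow> real" where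
  "binom_lower_tail m r q = (\<Sum>k<r. real (m choose k) * q^k * (1-q)^(m-k))"

definition binom_tail :: "nat \<Rightarrow> nat \<Rightarrow> real \<Rightarrow> real" where
  "binom_tail m r q = (\<Sum>k\<in>{r..m}. real (m choose k) * q^k * (1-q)^(m-k))"

lemma binom_expect_indicator_ge:
  "binom_expect m q (\<lambda>k. if r \<le> k then 1 else 0) = binom_tail m r q"
proof -
  have "{k\<in>{..m}. r \<le> k} = {r..m}" by auto
  then show ?thesis
    unfolding binom_expect_def binom_tail_def
    using sum.inter_filter[of "{..m}" "\<lambda>k. real (m choose k) * q^k * (1-q)^(m-k)" "\<lambda>k. r \<le> k"]
    by (simp add: if_distrib cong: if_cong)
qed

lemma binom_expect_indicator_less:
  assumes "r \<le> Suc m"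
  shows "binom_expect m q (\<lambda>k. if k < r then 1 else 0) = binom_lower_tail m r q"
proof -
  have "{k\<in>{..m}. k < r} = {..<r}" using assms by auto
  then show ?thesis
    unfolding binom_expect_def binom_lower_tail_def
    using sum.inter_filter[of "{..m}" "\<lambda>k. real (m choose k) * q^k * (1-q)^(m-k)" "\<lambda>k. k < r"]
    by (simp add: if_distrib cong: if_cong)
qed

lemma binom_lower_tail_add_tail:
  assumes "r \<le> Suc m"
  shows "binom_lower_tail m r q + binom_tail m r q = 1"
proof -
  have "binom_expect m q (\<lambda>k. (if k < r then 1 else 0) + (if r \<le> k then 1 else 0))
      = binom_expect m q (\<lambda>_. 1)"
    by (rule binom_expect_cong) simp
  then show ?thesis
    by (simp add: binom_expect_add binom_expect_indicator_ge binom_expect_indicator_less[OF assms])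
qed

lemma binom_tail_nonneg: "0 \<le> q \<Longrightarrow> q \<le> 1 \<Longrightarrow> 0 \<le> binom_tail m r q"
  unfolding binom_tail_def by (intro sum_nonneg) auto

lemma binom_tail_le_1:
  assumes "0 \<le> q" "q \<le> 1" "r \<le> Suc m"
  shows "binom_tail m r q \<le> 1"
proof -
  have "0 \<le> binom_lower_tail m r q"
    unfolding binom_lower_tail_def using assms by (intro sum_nonneg) auto
  then show ?thesis using binom_lower_tail_add_tail[OF assms(3), of q] by linarith
qed

lemma binom_tail_pos:
  assumes "0 < q" "q \<le> 1" "r \<le> m"
  shows "0 < binom_tail m r q"
proof -
  have "0 < real (m choose m) * q^m * (1-q)^(m-m)" using assms by simp
  also have "\<dots> \<le> binom_tail m r q"
    unfolding binom_tail_def using assms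
    by (intro member_le_sum[of m "{r..m}" "\<lambda>k. real (m choose k) * q^k * (1-q)^(m-k)"]) auto
  finally show ?thesis .
qed

lemma binom_tail_0 [simp]: "binom_tail m 0 q = 1"
  using binom_lower_tail_add_tail[of 0 m q] by (simp add: binom_lower_tail_def)

lemma binom_tail_at_0: "1 \<le> r \<Longrightarrow> binom_tail m r 0 = 0"
  unfolding binom_tail_def by (intro sum.neutral) auto

lemma binom_tail_at_1:
  assumes "r \<le> m"
  shows "binom_tail m r 1 = 1"
proof -
  have "binom_tail m r 1 = (\<Sum>k\<in>{r..m}. if k = m then 1 else 0)"
    unfolding binom_tail_def by (intro sum.cong) auto
  then show ?thesis using assms by simp
qed

lemma binom_tail_ge_chebyshev:
  assumes "0 \<le> q" "q \<le> 1" "r \<le> m" "0 < D" "D \<le> real m * q - real r"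
  shows "1 - real m * q * (1-q) / D^2 \<le> binom_tail m r q"
proof -
  have "binom_lower_tail m r q = binom_expect m q (\<lambda>k. if k < r then 1 else 0)"
    using binom_expect_indicator_less assms by simp
  also have "\<dots> \<le> binom_expect m q (\<lambda>k. (real k - real m * q)^2 / D^2)"
  proof (rule binom_expect_mono)
    fix k assume "k \<le> m"
    show "(if k < r then 1 else 0) \<le> (real k - real m * q)^2 / D^2"
    proof (cases "k < r")
      case True
      then have "D \<le> real m * q - real k" using assms by linarith
      then have "D^2 \<le> (real m * q - real k)^2" using assms by (intro power_mono) auto
      then have "D^2 \<le> (real k - real m * q)^2" by (simp add: power2_commute)
      then show ?thesis using True assms by simp
    qed simp
  qed (use assms in auto)
  also have "\<dots> = real m * q * (1-q) / D^2"
    using binom_expect_cmult[of m q "1/D^2"] binom_expect_variance[of m q] by simp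
  finally show ?thesis using binom_lower_tail_add_tail[of r m q] assms by simp
qed

lemma binom_tail_le_chebyshev:
  assumes "0 \<le> q" "q \<le> 1" "0 < D" "D \<le> real r - real m * q"
  shows "binom_tail m r q \<le> real m * q * (1-q) / D^2"
proof -
  have "binom_tail m r q = binom_expect m q (\<lambda>k. if r \<le> k then 1 else 0)"
    by (simp add: binom_expect_indicator_ge)
  also have "\<dots> \<le> binom_expect m q (\<lambda>k. (real k - real m * q)^2 / D^2)"
  proof (rule binom_expect_mono)
    fix k assume "k \<le> m"
    show "(if r \<le> k then 1 else 0) \<le> (real k - real m * q)^2 / D^2"
    proof (cases "r \<le> k")
      case True
      then have "D \<le> real k - real m * q" using assms by linarith
      then have "D^2 \<le> (real k - real m * q)^2" using assms by (intro power_mono) auto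
      then show ?thesis using True assms by simp
    qed simp
  qed (use assms in auto)
  also have "\<dots> = real m * q * (1-q) / D^2"
    using binom_expect_cmult[of m q "1/D^2"] binom_expect_variance[of m q] by simp
  finally show ?thesis .
qed

lemma binom_tail_near_1_ge:
  assumes "0 \<le> s" "s < 1/2" "1 \<le> K" "2*K \<le> m"
  shows "1 - 2*s / ((1 - 2*s)^2 * real K) \<le> binom_tail m (m-K) (1 - 2*s*real K/real m)"
proof -
  define q where "q = 1 - 2*s*real K/real m"
  have m: "0 < real m" using assms by simp
  have "2*s*real K \<le> 2*real K" "2*real K \<le> real m"
    using assms mult_right_mono[of s 1 "2*real K"] by simp_all
  then have "2*s*real K/real m \<le> 1" using m by (simp add: field_simps)
  then have q: "0 \<le> q" "q \<le> 1" using assms m unfolding q_def by simp_all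
  have "real m * q - real (m-K) = (1 - 2*s) * real K" using assms m unfolding q_def by (simp add: field_simps)
  then have chebyshev: "1 - real m * q * (1-q) / ((1 - 2*s) * real K)^2 \<le> binom_tail m (m-K) q"
    using q assms by (intro binom_tail_ge_chebyshev) auto
  have "real m * (1-q) = 2*s*real K" using m unfolding q_def by simp
  then have "real m * q * (1-q) \<le> 2*s*real K"
    using q mult_left_le_one_le[of "2*s*real K" q] assms by (simp add: mult.commute mult.left_commute)
  then have "real m * q * (1-q) / ((1 - 2*s) * real K)^2 \<le> 2*s*real K / ((1 - 2*s) * real K)^2"
    by (rule divide_right_mono) simp
  also have "\<dots> = 2*s / ((1 - 2*s)^2 * real K)"
    using assms by (simp add: power2_eq_square)
  finally show ?thesis using chebyshev unfolding q_def by simp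
qed

lemma binom_tail_near_1_le:
  assumes "1/2 < s" "s \<le> 1" "1 \<le> K" "2*K \<le> m"
  shows "binom_tail m (m-K) (1 - 2*s*real K/real m) \<le> 2*s / ((2*s - 1)^2 * real K)"
proof -
  define q where "q = 1 - 2*s*real K/real m"
  have m: "0 < real m" using assms by simp
  have "2*s*real K \<le> 2*real K" "2*real K \<le> real m"
    using assms mult_right_mono[of s 1 "2*real K"] by simp_all
  then have "2*s*real K/real m \<le> 1" using m by (simp add: field_simps)
  then have q: "0 \<le> q" "q \<le> 1" using assms m unfolding q_def by simp_all
  have "real (m-K) - real m * q = (2*s - 1) * real K" using assms m unfolding q_def by (simp add: field_simps)
  then have "binom_tail m (m-K) q \<le> real m * q * (1-q) / ((2*s - 1) * real K)^2"
    using q assms by (intro binom_tail_le_chebyshev) auto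
  also have "real m * (1-q) = 2*s*real K" using m unfolding q_def by simp
  then have "real m * q * (1-q) \<le> 2*s*real K"
    using q mult_left_le_one_le[of "2*s*real K" q] assms by (simp add: mult.commute mult.left_commute)
  then have "real m * q * (1-q) / ((2*s - 1) * real K)^2 \<le> 2*s*real K / ((2*s - 1) * real K)^2"
    by (rule divide_right_mono) simp
  also have "\<dots> = 2*s / ((2*s - 1)^2 * real K)"
    using assms by (simp add: power2_eq_square)
  finally show ?thesis unfolding q_def .
qed

section \<open>Monotonicity of the binomial tail\<close>

definition binom_tail_deriv :: "nat \<Rightarrow> nat \<Rightarrow> real \<Rightarrow> real" where
  "binom_tail_deriv m r q = real m * real ((m-1) choose (r-1)) * q^(r-1) * (1-q)^(m-r)"

lemma binom_lower_tail_has_derivative: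
  assumes "r \<le> m"
  shows "(binom_lower_tail m r has_real_derivative (if r = 0 then 0 else - binom_tail_deriv m r q)) (at q)"
  using assms
proof (induction r)
  case 0
  then show ?case by (simp add: binom_lower_tail_def[abs_def])
next
  case (Suc r)
  have step: "binom_lower_tail m (Suc r) = (\<lambda>x. binom_lower_tail m r x + real (m choose r) * (x^r * (1-x)^(m-r)))"
    by (rule ext) (simp add: binom_lower_tail_def mult.assoc)
  have monomial: "((\<lambda>x. x^r * (1-x)^(m-r)) has_real_derivative
      real r * q^(r-1) * (1-q)^(m-r) - real (m-r) * q^r * (1-q)^(m-r-1)) (at q)"
    by (auto intro!: derivative_eq_intros simp: algebra_simps)
  have absorb: "real (m choose r) * real (m - r) = real m * real ((m-1) choose r)"
    using binomial_absorb_comp[of m r] by (simp add: mult.commute flip: of_nat_mult)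
  have "(if r = 0 then 0 else - binom_tail_deriv m r q)
      + real (m choose r) * (real r * q^(r-1) * (1-q)^(m-r) - real (m-r) * q^r * (1-q)^(m-r-1))
      = - binom_tail_deriv m (Suc r) q"
  proof (cases r)
    case 0
    then show ?thesis using absorb by (simp add: binom_tail_deriv_def)
  next
    case (Suc s)
    have "real (Suc s) * real (m choose Suc s) = real m * real ((m-1) choose s)"
      by (metis binomial_absorption of_nat_mult)
    then have "real (m choose r) * real r = real m * real ((m-1) choose (r-1))"
      using Suc by (simp add: mult.commute)
    then have "real (m choose r) * (real r * q^(r-1) * (1-q)^(m-r)) = binom_tail_deriv m r q"
      unfolding binom_tail_deriv_def by (simp add: algebra_simps)
    moreover have "real (m choose r) * (real (m-r) * q^r * (1-q)^(m-r-1)) = binom_tail_deriv m (Suc r) q"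
      using absorb unfolding binom_tail_deriv_def by (simp add: algebra_simps)
    ultimately show ?thesis using Suc by (simp add: algebra_simps)
  qed
  moreover have "(binom_lower_tail m (Suc r) has_real_derivative
      (if r = 0 then 0 else - binom_tail_deriv m r q)
      + real (m choose r) * (real r * q^(r-1) * (1-q)^(m-r) - real (m-r) * q^r * (1-q)^(m-r-1))) (at q)"
    unfolding step using Suc by (intro DERIV_add DERIV_cmult monomial) simp
  ultimately show ?case by simp
qed

lemma binom_tail_has_derivative:
  assumes "1 \<le> r" "r \<le> m"
  shows "(binom_tail m r has_real_derivative binom_tail_deriv m r q) (at q)"
proof -
  have "binom_tail m r = (\<lambda>x. 1 - binom_lower_tail m r x)"
    using binom_lower_tail_add_tail[of r m] assms by (intro ext) (simp add: algebra_simps)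
  then show ?thesis
    using DERIV_diff[OF DERIV_const binom_lower_tail_has_derivative[OF assms(2)], of 1 q] assms
    by simp
qed

lemma continuous_on_binom_tail: "continuous_on S (binom_tail m r)"
  unfolding binom_tail_def[abs_def] by (intro continuous_intros)

lemma binom_tail_strict_mono:
  assumes "1 \<le> r" "r \<le> m" "0 \<le> a" "a < b" "b \<le> 1"
  shows "binom_tail m r a < binom_tail m r b"
proof (rule DERIV_pos_imp_increasing_open[OF assms(4) _ continuous_on_binom_tail])
  fix x assume "a < x" "x < b"
  then have "0 < binom_tail_deriv m r x"
    using assms unfolding binom_tail_deriv_def by simp
  then show "\<exists>y. (binom_tail m r has_real_derivative y) (at x) \<and> 0 < y"
    using binom_tail_has_derivative[OF assms(1,2)] by blast
qed

lemma binom_tail_mono: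
  assumes "r \<le> m" "0 \<le> a" "a \<le> b" "b \<le> 1"
  shows "binom_tail m r a \<le> binom_tail m r b"
  using binom_tail_strict_mono[of r m a b] assms by (cases "r = 0 \<or> a = b") auto

definition tail_odds_sum :: "nat \<Rightarrow> nat \<Rightarrow> real \<Rightarrow> real" where
  "tail_odds_sum m r q = (\<Sum>k\<in>{r..m}. real (m choose k) * (q/(1-q))^(k-r+1))"

lemma binom_tail_eq_odds_sum:
  assumes "0 < q" "q < 1" "1 \<le> r"
  shows "binom_tail m r q = q^(r-1) * (1-q)^(Suc (m-r)) * tail_odds_sum m r q"
  unfolding binom_tail_def tail_odds_sum_def sum_distrib_left
proof (intro sum.cong refl)
  fix k assume "k \<in> {r..m}"
  then have k: "k = (r-1) + (k-r+1)" "Suc (m-r) = (m-k) + (k-r+1)" using assms by auto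
  have "(1-q)^(k-r+1) \<noteq> 0" using assms by simp
  then show "real (m choose k) * q^k * (1-q)^(m-k)
      = q^(r-1) * (1-q)^(Suc (m-r)) * (real (m choose k) * (q/(1-q))^(k-r+1))"
    by (subst k(1), subst k(2)) (simp add: power_add power_divide)
qed

lemma tail_odds_sum_strict_mono:
  assumes "0 < a" "a < b" "b < 1" "r \<le> m"
  shows "tail_odds_sum m r a < tail_odds_sum m r b"
  unfolding tail_odds_sum_def
proof (rule sum_strict_mono_ex1)
  have odds: "0 \<le> a/(1-a)" "a/(1-a) < b/(1-b)" using assms by (simp_all add: field_simps)
  then show "\<forall>k\<in>{r..m}. real (m choose k) * (a/(1-a))^(k-r+1) \<le> real (m choose k) * (b/(1-b))^(k-r+1)"
    by (intro ballI mult_left_mono power_mono) auto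
  show "\<exists>k\<in>{r..m}. real (m choose k) * (a/(1-a))^(k-r+1) < real (m choose k) * (b/(1-b))^(k-r+1)"
    using mult_strict_left_mono[OF odds(2), of "real (m choose r)"] assms by (intro bexI[of _ r]) auto
qed simp

text \<open>That is, \<open>(1 - q) T'(q) / T(q)\<close> strictly decreases for the tail \<open>T\<close>, because
  \<open>(1 - q) T'(q)\<close> is a constant multiple of the prefactor of the increasing
  \<^const>\<open>tail_odds_sum\<close> in \<open>binom_tail_eq_odds_sum\<close>.\<close>
lemma binom_tail_deriv_ratio_strict_antimono:
  assumes "1 \<le> r" "r \<le> m" "0 < q0" "q0 < q1" "q1 < 1"
  shows "binom_tail_deriv m r q1 * (1-q1) * binom_tail m r q0
       < binom_tail_deriv m r q0 * (1-q0) * binom_tail m r q1"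
proof -
  define c where "c = real m * real ((m-1) choose (r-1))"
  define w where "w q = q^(r-1) * (1-q)^(Suc (m-r))" for q :: real
  have "0 < c" unfolding c_def using assms by simp
  have deriv: "binom_tail_deriv m r q * (1-q) = c * w q" for q
    unfolding binom_tail_deriv_def c_def w_def by (simp add: algebra_simps)
  have tail: "binom_tail m r q = w q * tail_odds_sum m r q" if "0 < q" "q < 1" for q
    using binom_tail_eq_odds_sum[OF that assms(1)] unfolding w_def by simp
  have "0 < w q0" "0 < w q1" unfolding w_def using assms by auto
  then have "c * w q1 * (w q0 * tail_odds_sum m r q0) < c * w q0 * (w q1 * tail_odds_sum m r q1)"
    using tail_odds_sum_strict_mono[of q0 q1 r m] assms \<open>0 < c\<close>
    by (simp add: mult.assoc mult.left_commute[of "w q1" "w q0"])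
  then show ?thesis using deriv[of q0] deriv[of q1] tail[of q0] tail[of q1] assms by simp
qed

section \<open>Single crossing of the low-signal gain\<close>

lemma mix_in_unit_interval:
  fixes a y :: real
  assumes "0 \<le> a" "a \<le> 1" "0 \<le> y" "y \<le> 1"
  shows "0 \<le> a + (1-a)*y" "a + (1-a)*y \<le> 1"
  using assms mult_left_le[of y "1-a"] by (simp_all add: mult_nonneg_nonneg)

definition tail_ratio :: "real \<Rightarrow> nat \<Rightarrow> nat \<Rightarrow> real \<Rightarrow> real" where
  "tail_ratio p m r y = binom_tail m r (p + (1-p)*y) / binom_tail m r ((1-p) + p*y)"

lemma tail_ratio_strict_antimono:
  assumes p: "1/2 < p" "p < 1" and r: "1 \<le> r" "r \<le> m" and ab: "0 \<le> a" "a < b" "b < 1"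
  shows "tail_ratio p m r b < tail_ratio p m r a"
proof (rule DERIV_neg_imp_decreasing[OF ab(2)])
  fix x assume x: "a \<le> x" "x \<le> b"
  define q1 where "q1 = p + (1-p)*x"
  define q0 where "q0 = (1-p) + p*x"
  have q: "1 - q1 = (1-p)*(1-x)" "1 - q0 = p*(1-x)" "q1 - q0 = (2*p-1)*(1-x)"
    unfolding q1_def q0_def by (simp_all add: algebra_simps)
  have "0 < (2*p-1)*(1-x)" "0 < (1-p)*(1-x)" "0 \<le> p*x" using x ab p by auto
  then have qs: "0 < q0" "q0 < q1" "q1 < 1" using q p unfolding q0_def by linarith+
  have T0: "0 < binom_tail m r q0" using qs r by (intro binom_tail_pos) auto
  define d where "d = (binom_tail_deriv m r q1 * (1-p) * binom_tail m r q0
                       - binom_tail m r q1 * (binom_tail_deriv m r q0 * p)) / (binom_tail m r q0)^2"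
  have "(tail_ratio p m r has_real_derivative d) (at x)"
    unfolding tail_ratio_def[abs_def] q1_def q0_def d_def power2_eq_square
    by (intro DERIV_divide DERIV_chain2[OF binom_tail_has_derivative[OF r]] derivative_eq_intros)
       (use T0 in \<open>auto simp: q0_def\<close>)
  moreover have "d < 0"
  proof -
    have "(1-x) * (binom_tail_deriv m r q1 * (1-p) * binom_tail m r q0)
        < (1-x) * (binom_tail m r q1 * (binom_tail_deriv m r q0 * p))"
      using binom_tail_deriv_ratio_strict_antimono[OF r qs] q by (simp add: algebra_simps)
    then show ?thesis
      using x ab T0 unfolding d_def by (simp add: mult_less_cancel_left divide_neg_pos)
  qed
  ultimately show "\<exists>y. (tail_ratio p m r has_real_derivative y) (at x) \<and> y < 0" by blast
qed

text \<open>Twice the expected gain from investing after a low signal, when everybody invests after a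
  high signal and with probability \<open>y\<close> after a low one; \<open>p + (1-p)*y\<close> and \<open>(1-p) + p*y\<close> are then
  the investment probabilities of a player in the high and the low state.\<close>
definition low_gain :: "real \<Rightarrow> nat \<Rightarrow> nat \<Rightarrow> real \<Rightarrow> real" where
  "low_gain p m r y = (1-p) * binom_tail m r (p + (1-p)*y) - p * binom_tail m r ((1-p) + p*y)"

lemma low_gain_at_1: "r \<le> m \<Longrightarrow> low_gain p m r 1 = 1 - 2*p"
  unfolding low_gain_def by (simp add: binom_tail_at_1)

lemma continuous_on_low_gain: "continuous_on S (low_gain p m r)"
  unfolding low_gain_def[abs_def] by (intro continuous_intros continuous_on_compose2[OF continuous_on_binom_tail]) auto

lemma low_gain_nonneg_iff:
  assumes p: "1/2 < p" "p < 1" and r: "r \<le> m" and y: "0 \<le> y" "y \<le> 1"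
  shows "0 \<le> low_gain p m r y \<longleftrightarrow> p/(1-p) \<le> tail_ratio p m r y"
    and "low_gain p m r y \<le> 0 \<longleftrightarrow> tail_ratio p m r y \<le> p/(1-p)"
proof -
  have "0 < (1-p) + p*y" using p y by (simp add: add_pos_nonneg)
  moreover have "(1-p) + p*y \<le> 1" using p y mix_in_unit_interval[of "1-p" y] by simp
  ultimately have "0 < binom_tail m r ((1-p) + p*y)" using r by (intro binom_tail_pos) auto
  then show "0 \<le> low_gain p m r y \<longleftrightarrow> p/(1-p) \<le> tail_ratio p m r y"
    and "low_gain p m r y \<le> 0 \<longleftrightarrow> tail_ratio p m r y \<le> p/(1-p)"
    unfolding low_gain_def tail_ratio_def using p by (simp_all add: field_simps)
qed

lemma low_gain_single_crossing:
  assumes p: "1/2 < p" "p < 1" and r: "r \<le> m" and y: "0 \<le> y1" "y1 < y2" "y2 \<le> 1"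
    and "low_gain p m r y1 \<le> 0" "0 \<le> low_gain p m r y2"
  shows False
proof (cases "r = 0")
  case True
  then show False using assms by (simp add: low_gain_def)
next
  case False
  have "y2 \<noteq> 1" using assms low_gain_at_1[OF r, of p] by auto
  then have "tail_ratio p m r y2 < tail_ratio p m r y1"
    using tail_ratio_strict_antimono[OF p _ r y(1,2)] False y by simp
  moreover have "tail_ratio p m r y1 \<le> p/(1-p)" "p/(1-p) \<le> tail_ratio p m r y2"
    using low_gain_nonneg_iff[OF p r] assms by auto
  ultimately show False by simp
qed

lemma low_gain_slack_exists:
  assumes "1/2 < p" "r \<le> m"
  shows "\<exists>y. 0 \<le> y \<and> y \<le> 1 \<and> (y < 1 \<longrightarrow> low_gain p m r y \<le> 0) \<and> (0 < y \<longrightarrow> 0 \<le> low_gain p m r y)"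
proof (cases "low_gain p m r 0 \<le> 0")
  case False
  moreover have "low_gain p m r 1 \<le> 0" using low_gain_at_1[OF assms(2), of p] assms(1) by simp
  ultimately obtain y where "0 \<le> y" "y \<le> 1" "low_gain p m r y = 0"
    using IVT2'[of "low_gain p m r" 1 0 0] continuous_on_low_gain by force
  then show ?thesis by auto
qed auto

section \<open>Reduction of the game to binomial sums\<close>

lemma sum_PiE_insert:
  assumes "x \<notin> I"
  shows "(\<Sum>a\<in>PiE (insert x I) B. G a) = (\<Sum>y\<in>B x. \<Sum>g\<in>PiE I B. G (g(x := y)))"
proof -
  have "(\<Sum>a\<in>PiE (insert x I) B. G a) = (\<Sum>(y,g)\<in>B x \<times> PiE I B. G (g(x := y)))"
    using assms
    by (intro sum.reindex_bij_witness[of _ "\<lambda>(y,g). g(x := y)" "\<lambda>g. (g x, g(x := undefined))"])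
       (auto simp: PiE_def extensional_def)
  then show ?thesis by (simp add: sum.cartesian_product)
qed

lemma sum_PiE_insert_count:
  fixes c :: "'i \<Rightarrow> bool \<Rightarrow> real"
  assumes "finite I" "x \<notin> I"
  shows "(\<Sum>a\<in>PiE (insert x I) (\<lambda>_. UNIV). (\<Prod>j\<in>insert x I. c j (a j)) * h (a x) (card {j\<in>insert x I. a j}))
       = (\<Sum>b\<in>UNIV. c x b * (\<Sum>g\<in>PiE I (\<lambda>_. UNIV).
            (\<Prod>j\<in>I. c j (g j)) * h b (card {j\<in>I. g j} + (if b then 1 else 0))))"
proof -
  have summand: "(\<Prod>j\<in>insert x I. c j ((g(x := b)) j)) * h ((g(x := b)) x) (card {j\<in>insert x I. (g(x := b)) j})
      = c x b * ((\<Prod>j\<in>I. c j (g j)) * h b (card {j\<in>I. g j} + (if b then 1 else 0)))" for g b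
  proof -
    have "(\<Prod>j\<in>I. c j ((g(x := b)) j)) = (\<Prod>j\<in>I. c j (g j))"
      using assms by (intro prod.cong) auto
    moreover have "{j\<in>insert x I. (g(x := b)) j} = (if b then insert x {j\<in>I. g j} else {j\<in>I. g j})"
      using assms by auto
    ultimately show ?thesis using assms by (simp add: mult.assoc)
  qed
  show ?thesis by (simp only: sum_PiE_insert[OF assms(2)] summand) (simp add: sum_distrib_left)
qed

lemma sum_profiles_binom_expect:
  assumes "finite I" "c False = 1 - c True"
  shows "(\<Sum>a\<in>PiE I (\<lambda>_. UNIV). (\<Prod>j\<in>I. c (a j)) * h (card {j\<in>I. a j}))
       = binom_expect (card I) (c True) h"
  using assms(1)
proof (induction I arbitrary: h rule: finite_induct)
  case (insert x I)
  then show ?case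
    using sum_PiE_insert_count[OF insert.hyps(1,2), of "\<lambda>_. c" "\<lambda>_. h"]
      insert.IH[of h] insert.IH[of "\<lambda>k. h (Suc k)"]
    by (simp add: UNIV_bool binom_expect_Suc assms(2))
qed simp

lemma sum_profiles_deviation:
  assumes "finite J" "i \<notin> J" "\<And>j. j \<in> J \<Longrightarrow> c j = c'" "c' False = 1 - c' True"
  shows "(\<Sum>a\<in>PiE (insert i J) (\<lambda>_. UNIV). (\<Prod>j\<in>insert i J. c j (a j)) * H (a i) (card {j\<in>insert i J. a j}))
       = (\<Sum>b\<in>UNIV. c i b * binom_expect (card J) (c' True) (\<lambda>k. H b (k + (if b then 1 else 0))))"
proof -
  have "(\<Prod>j\<in>J. c j (g j)) = (\<Prod>j\<in>J. c' (g j))" for g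
    using assms(3) by (intro prod.cong) auto
  then show ?thesis
    unfolding sum_PiE_insert_count[OF assms(1,2)]
    by (simp add: sum_profiles_binom_expect[OF assms(1,4), where h="\<lambda>k. H _ (k + _)"])
qed

definition signal_prob :: "real \<Rightarrow> bool \<Rightarrow> bool \<Rightarrow> real" where
  "signal_prob p w s = (if s = w then p else 1 - p)"

definition action_prob :: "real \<Rightarrow> strategy \<Rightarrow> bool \<Rightarrow> bool \<Rightarrow> real" where
  "action_prob p \<sigma> w b = (\<Sum>s\<in>UNIV. signal_prob p w s * (if b then \<sigma> s else 1 - \<sigma> s))"

definition invest_prob :: "real \<Rightarrow> strategy \<Rightarrow> bool \<Rightarrow> real" where
  "invest_prob p \<sigma> w = action_prob p \<sigma> w True"

lemma invest_prob_H: "invest_prob p \<sigma> True = p * \<sigma> True + (1-p) * \<sigma> False"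
  and invest_prob_L: "invest_prob p \<sigma> False = (1-p) * \<sigma> True + p * \<sigma> False"
  by (simp_all add: invest_prob_def action_prob_def signal_prob_def UNIV_bool)

lemma action_prob_False: "action_prob p \<sigma> w False = 1 - invest_prob p \<sigma> w"
  by (cases w) (simp_all add: invest_prob_def action_prob_def signal_prob_def UNIV_bool algebra_simps)

lemma invest_prob_bounds:
  assumes "valid_strategy \<sigma>" "0 \<le> p" "p \<le> 1"
  shows "0 \<le> invest_prob p \<sigma> w" "invest_prob p \<sigma> w \<le> 1"
proof -
  have "0 \<le> \<sigma> s" "\<sigma> s \<le> 1" for s using assms(1) by (auto simp: valid_strategy_def)
  then have "0 \<le> p * \<sigma> s" "p * \<sigma> s \<le> p" "0 \<le> (1-p) * \<sigma> s" "(1-p) * \<sigma> s \<le> 1-p" for s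
    using assms by (auto intro: mult_left_le)
  note bounds = this[of True] this[of False]
  show "0 \<le> invest_prob p \<sigma> w" "invest_prob p \<sigma> w \<le> 1"
    using bounds by (cases w; simp add: invest_prob_H invest_prob_L)+
qed

lemma expect_eq_sum_profiles:
  "expect p n sig (\<lambda>w s a. g w a) =
     (\<Sum>w\<in>UNIV. 1/2 * (\<Sum>a\<in>profiles n. (\<Prod>j<n. action_prob p (sig j) w (a j)) * g w a))"
proof -
  have "(\<Sum>s\<in>profiles n. outcome_prob p n sig w s a) = 1/2 * (\<Prod>j<n. action_prob p (sig j) w (a j))"
    for w a
  proof -
    have "(\<Sum>s\<in>profiles n. outcome_prob p n sig w s a)
        = 1/2 * (\<Sum>s\<in>profiles n. \<Prod>j<n. signal_prob p w (s j)
            * (if a j then sig j (s j) else 1 - sig j (s j)))"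
      unfolding outcome_prob_def sum_distrib_left signal_prob_def
      by (intro sum.cong refl) (simp add: prod.distrib mult_ac)
    also have "\<dots> = 1/2 * (\<Prod>j<n. action_prob p (sig j) w (a j))"
      unfolding profiles_def action_prob_def
      by (subst prod_sum_PiE) simp_all
    finally show ?thesis .
  qed
  note inner = this
  have "(\<Sum>s\<in>profiles n. \<Sum>a\<in>profiles n. outcome_prob p n sig w s a * g w a)
      = 1/2 * (\<Sum>a\<in>profiles n. (\<Prod>j<n. action_prob p (sig j) w (a j)) * g w a)" for w
    by (subst sum.swap) (simp add: inner sum_distrib_left flip: sum_distrib_right mult.assoc)
  then show ?thesis unfolding expect_def by (intro sum.cong refl)
qed

lemma num_act_eq_card: "num_act n a = card {j\<in>{..<n}. a j}"
  unfolding num_act_def by (simp add: lessThan_def)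

lemma expect_symmetric_count:
  "expect p n (\<lambda>_. \<sigma>) (\<lambda>w s a. h (num_act n a)) =
     1/2 * (binom_expect n (invest_prob p \<sigma> True) h + binom_expect n (invest_prob p \<sigma> False) h)"
proof -
  have "(\<Sum>a\<in>profiles n. (\<Prod>j<n. action_prob p \<sigma> w (a j)) * h (num_act n a))
      = binom_expect n (invest_prob p \<sigma> w) h" for w
    using sum_profiles_binom_expect[of "{..<n}" "action_prob p \<sigma> w" h]
    by (simp add: profiles_def num_act_eq_card action_prob_False invest_prob_def)
  then show ?thesis
    by (simp add: expect_eq_sum_profiles[where g="\<lambda>w a. h (num_act n a)"] UNIV_bool algebra_simps)
qed

text \<open>A player's investment succeeds in state \<open>w\<close> iff at least \<open>B - 1\<close> of the other \<open>n - 1\<close>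
  players invest, which under a symmetric profile is a binomial tail event.\<close>
definition others_reach_prob :: "real \<Rightarrow> nat \<Rightarrow> nat \<Rightarrow> strategy \<Rightarrow> bool \<Rightarrow> real" where
  "others_reach_prob p B n \<sigma> w = binom_tail (n-1) (B-1) (invest_prob p \<sigma> w)"

definition invest_gain :: "real \<Rightarrow> nat \<Rightarrow> nat \<Rightarrow> strategy \<Rightarrow> bool \<Rightarrow> real" where
  "invest_gain p B n \<sigma> s = 1/2 * (signal_prob p True s * others_reach_prob p B n \<sigma> True
                                 - signal_prob p False s * others_reach_prob p B n \<sigma> False)"

lemma sum_profiles_payoff_deviation:
  assumes "i < n" "1 \<le> B"
  shows "(\<Sum>a\<in>profiles n. (\<Prod>j<n. action_prob p (((\<lambda>_. \<sigma>)(i := \<tau>)) j) w (a j)) * payoff B n i w a)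
       = invest_prob p \<tau> w * (if w then 1 else -1) * others_reach_prob p B n \<sigma> w"
proof -
  define J where "J = {..<n} - {i}"
  have J: "{..<n} = insert i J" "i \<notin> J" "finite J" "card J = n - 1"
    using assms by (auto simp: J_def)
  define H where "H b k = (if b \<and> B \<le> k then (if w then 1 else -1) else 0 :: real)" for b k
  have others: "action_prob p (((\<lambda>_. \<sigma>)(i := \<tau>)) j) w = action_prob p \<sigma> w" if "j \<in> J" for j
    using J(2) that by auto
  have complement: "action_prob p \<sigma> w False = 1 - action_prob p \<sigma> w True"
    using action_prob_False[of p \<sigma> w] by (simp add: invest_prob_def)
  have "(\<Sum>a\<in>profiles n. (\<Prod>j<n. action_prob p (((\<lambda>_. \<sigma>)(i := \<tau>)) j) w (a j)) * payoff B n i w a)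
      = (\<Sum>a\<in>PiE (insert i J) (\<lambda>_. UNIV). (\<Prod>j\<in>insert i J. action_prob p (((\<lambda>_. \<sigma>)(i := \<tau>)) j) w (a j))
          * H (a i) (card {j\<in>insert i J. a j}))"
    unfolding profiles_def payoff_def num_act_eq_card J(1) H_def by simp
  also have "\<dots> = (\<Sum>b\<in>UNIV. action_prob p \<tau> w b
           * binom_expect (n-1) (invest_prob p \<sigma> w) (\<lambda>k. H b (k + (if b then 1 else 0))))"
    using sum_profiles_deviation[OF J(3,2) others complement, where H=H]
    by (simp add: J(4) invest_prob_def)
  also have "\<dots> = invest_prob p \<tau> w * (if w then 1 else -1) * others_reach_prob p B n \<sigma> w"
  proof -
    have "binom_expect (n-1) q (\<lambda>k. H True (k + 1))
        = binom_expect (n-1) q (\<lambda>k. (if w then 1 else -1) * (if B - 1 \<le> k then 1 else 0))" for q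
      by (rule binom_expect_cong) (use assms(2) in \<open>auto simp: H_def\<close>)
    then have "binom_expect (n-1) q (\<lambda>k. H True (k + 1)) = (if w then 1 else -1) * binom_tail (n-1) (B-1) q"
      for q
      by (simp only: binom_expect_cmult binom_expect_indicator_ge)
    then show ?thesis
      by (simp add: UNIV_bool H_def others_reach_prob_def invest_prob_def)
  qed
  finally show ?thesis .
qed

lemma expect_deviation:
  assumes "i < n" "1 \<le> B"
  shows "expect p n ((\<lambda>_. \<sigma>)(i := \<tau>)) (\<lambda>w s a. payoff B n i w a)
       = \<tau> True * invest_gain p B n \<sigma> True + \<tau> False * invest_gain p B n \<sigma> False"
  unfolding expect_eq_sum_profiles[where g="\<lambda>w a. payoff B n i w a"] sum_profiles_payoff_deviation[OF assms]
  by (simp add: UNIV_bool invest_gain_def invest_prob_H invest_prob_L signal_prob_def field_simps)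

section \<open>The symmetric equilibrium\<close>

lemma linear_best_response_iff:
  fixes g :: "bool \<Rightarrow> real"
  assumes "valid_strategy \<sigma>"
  shows "(\<forall>\<tau>. valid_strategy \<tau> \<longrightarrow> \<tau> True * g True + \<tau> False * g False \<le> \<sigma> True * g True + \<sigma> False * g False)
     \<longleftrightarrow> (\<forall>s. (\<sigma> s < 1 \<longrightarrow> g s \<le> 0) \<and> (0 < \<sigma> s \<longrightarrow> 0 \<le> g s))"
    (is "(\<forall>\<tau>. _ \<longrightarrow> ?G \<tau> \<le> ?G \<sigma>) \<longleftrightarrow> _")
proof
  assume best: "\<forall>\<tau>. valid_strategy \<tau> \<longrightarrow> ?G \<tau> \<le> ?G \<sigma>"
  have "(c - \<sigma> s) * g s \<le> 0" if "0 \<le> c" "c \<le> 1" for s c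
  proof -
    have "valid_strategy (\<sigma>(s := c))" using assms that by (auto simp: valid_strategy_def)
    moreover have "?G (\<sigma>(s := c)) = ?G \<sigma> + (c - \<sigma> s) * g s" by (cases s) (simp_all add: algebra_simps)
    ultimately show ?thesis using best by fastforce
  qed
  note deviate = this
  show "\<forall>s. (\<sigma> s < 1 \<longrightarrow> g s \<le> 0) \<and> (0 < \<sigma> s \<longrightarrow> 0 \<le> g s)"
  proof (intro allI conjI impI)
    fix s
    show "g s \<le> 0" if "\<sigma> s < 1" using deviate[of 1 s] that by (simp add: mult_le_0_iff)
    show "0 \<le> g s" if "0 < \<sigma> s" using deviate[of 0 s] that by (simp add: zero_le_mult_iff)
  qed
next
  assume slack: "\<forall>s. (\<sigma> s < 1 \<longrightarrow> g s \<le> 0) \<and> (0 < \<sigma> s \<longrightarrow> 0 \<le> g s)"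
  have "\<tau> s * g s \<le> \<sigma> s * g s" if "valid_strategy \<tau>" for \<tau> s
  proof -
    have "0 \<le> \<tau> s" "\<tau> s \<le> 1" "0 \<le> \<sigma> s" "\<sigma> s \<le> 1"
      using assms that by (auto simp: valid_strategy_def)
    then show ?thesis
      using slack[rule_format, of s] by (cases "g s" "0::real" rule: linorder_cases) (auto intro: mult_right_mono mult_nonneg_nonpos)
  qed
  then show "\<forall>\<tau>. valid_strategy \<tau> \<longrightarrow> ?G \<tau> \<le> ?G \<sigma>" by (auto intro: add_mono)
qed

lemma is_BNE_symmetric_iff:
  assumes "0 < n" "1 \<le> B"
  shows "is_BNE p B n (\<lambda>_. \<sigma>) \<longleftrightarrow> valid_strategy \<sigma> \<and>
    (\<forall>s. (\<sigma> s < 1 \<longrightarrow> invest_gain p B n \<sigma> s \<le> 0) \<and> (0 < \<sigma> s \<longrightarrow> 0 \<le> invest_gain p B n \<sigma> s))"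
proof -
  define G where "G \<tau> = \<tau> True * invest_gain p B n \<sigma> True + \<tau> False * invest_gain p B n \<sigma> False" for \<tau>
  have deviate: "expect p n ((\<lambda>_. \<sigma>)(i := \<tau>)) (\<lambda>w s a. payoff B n i w a) = G \<tau>" if "i < n" for i \<tau>
    unfolding G_def by (rule expect_deviation[OF that assms(2)])
  have "(\<lambda>_. \<sigma>)(i := \<sigma>) = (\<lambda>_::nat. \<sigma>)" for i by auto
  then have stay: "expect p n (\<lambda>_. \<sigma>) (\<lambda>w s a. payoff B n i w a) = G \<sigma>" if "i < n" for i
    using deviate[OF that, of \<sigma>] by simp
  have "is_BNE p B n (\<lambda>_. \<sigma>) \<longleftrightarrow> valid_strategy \<sigma> \<and> (\<forall>\<tau>. valid_strategy \<tau> \<longrightarrow> G \<tau> \<le> G \<sigma>)"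
    unfolding is_BNE_def using assms(1) by (auto simp: deviate stay)
  then show ?thesis using linear_best_response_iff unfolding G_def by blast
qed

lemma nontrivial_symmetric_iff:
  assumes "valid_strategy \<sigma>" "0 < p" "p < 1" "1 \<le> B" "B \<le> n"
  shows "nontrivial p B n (\<lambda>_. \<sigma>) \<longleftrightarrow> 0 < \<sigma> True \<or> 0 < \<sigma> False"
proof -
  have "nontrivial p B n (\<lambda>_. \<sigma>) \<longleftrightarrow>
      0 < binom_tail n B (invest_prob p \<sigma> True) + binom_tail n B (invest_prob p \<sigma> False)"
    unfolding nontrivial_def expect_symmetric_count[where h="\<lambda>k. if B \<le> k then 1 else 0"]
    by (simp add: binom_expect_indicator_ge)
  also have "\<dots> \<longleftrightarrow> 0 < \<sigma> True \<or> 0 < \<sigma> False"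
  proof
    assume pos: "0 < binom_tail n B (invest_prob p \<sigma> True) + binom_tail n B (invest_prob p \<sigma> False)"
    show "0 < \<sigma> True \<or> 0 < \<sigma> False"
    proof (rule ccontr)
      assume "\<not> (0 < \<sigma> True \<or> 0 < \<sigma> False)"
      then have "\<sigma> True = 0" "\<sigma> False = 0"
        using assms(1) unfolding valid_strategy_def by (meson order.antisym not_less)+
      then show False
        using pos binom_tail_at_0[OF assms(4), of n] by (simp add: invest_prob_H invest_prob_L)
    qed
  next
    assume "0 < \<sigma> True \<or> 0 < \<sigma> False"
    then have "0 < p * \<sigma> True + (1-p) * \<sigma> False"
      using assms(1-3) unfolding valid_strategy_def by (auto intro: add_pos_nonneg add_nonneg_pos)
    then have "0 < invest_prob p \<sigma> True" by (simp add: invest_prob_H)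
    then have "0 < binom_tail n B (invest_prob p \<sigma> True)"
      using invest_prob_bounds[OF assms(1), of p True] assms by (intro binom_tail_pos) auto
    moreover have "0 \<le> binom_tail n B (invest_prob p \<sigma> False)"
      using invest_prob_bounds[OF assms(1)] assms by (intro binom_tail_nonneg) auto
    ultimately show "0 < binom_tail n B (invest_prob p \<sigma> True) + binom_tail n B (invest_prob p \<sigma> False)"
      by simp
  qed
  finally show ?thesis .
qed

lemma invest_gain_H_minus_L:
  "invest_gain p B n \<sigma> True - invest_gain p B n \<sigma> False
     = (2*p - 1)/2 * (others_reach_prob p B n \<sigma> True + others_reach_prob p B n \<sigma> False)"
  unfolding invest_gain_def signal_prob_def by (simp add: field_simps)

lemma invest_gain_H_ge:
  assumes "valid_strategy \<sigma>" "\<sigma> False \<le> \<sigma> True" "1/2 \<le> p" "p \<le> 1" "1 \<le> B" "B \<le> n"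
  shows "(2*p - 1)/2 * others_reach_prob p B n \<sigma> False \<le> invest_gain p B n \<sigma> True"
proof -
  have "invest_prob p \<sigma> True - invest_prob p \<sigma> False = (2*p - 1) * (\<sigma> True - \<sigma> False)"
    by (simp add: invest_prob_H invest_prob_L algebra_simps)
  moreover have "0 \<le> (2*p - 1) * (\<sigma> True - \<sigma> False)" using assms(2,3) by simp
  ultimately have "invest_prob p \<sigma> False \<le> invest_prob p \<sigma> True" by simp
  then have "others_reach_prob p B n \<sigma> False \<le> others_reach_prob p B n \<sigma> True"
    unfolding others_reach_prob_def
    using invest_prob_bounds[OF assms(1)] assms by (intro binom_tail_mono) auto
  then have "p * others_reach_prob p B n \<sigma> False \<le> p * others_reach_prob p B n \<sigma> True"
    using assms(3) by (simp add: mult_left_mono)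
  then show ?thesis unfolding invest_gain_def signal_prob_def by (simp add: field_simps)
qed

definition sym_nontrivial_BNE :: "real \<Rightarrow> nat \<Rightarrow> nat \<Rightarrow> strategy \<Rightarrow> bool" where
  "sym_nontrivial_BNE p B n \<sigma> \<longleftrightarrow> valid_strategy \<sigma> \<and> is_BNE p B n (\<lambda>_. \<sigma>) \<and> nontrivial p B n (\<lambda>_. \<sigma>)"

lemma sym_nontrivial_BNE_iff_slack:
  assumes "0 < p" "p < 1" "1 \<le> B" "B \<le> n"
  shows "sym_nontrivial_BNE p B n \<sigma> \<longleftrightarrow> valid_strategy \<sigma> \<and> (0 < \<sigma> True \<or> 0 < \<sigma> False) \<and>
    (\<forall>s. (\<sigma> s < 1 \<longrightarrow> invest_gain p B n \<sigma> s \<le> 0) \<and> (0 < \<sigma> s \<longrightarrow> 0 \<le> invest_gain p B n \<sigma> s))"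
  unfolding sym_nontrivial_BNE_def using is_BNE_symmetric_iff[of n B] nontrivial_symmetric_iff assms
  by auto

text \<open>If a player with a high signal did not always invest, he would be weakly unwilling to, so a
  player with a low signal, who is strictly more pessimistic, would never invest; but then
  investing after a high signal is strictly profitable.\<close>
lemma sym_nontrivial_BNE_invests_after_high:
  assumes p: "1/2 < p" "p < 1" and B: "1 \<le> B" "B \<le> n" and eq: "sym_nontrivial_BNE p B n \<sigma>"
  shows "\<sigma> True = 1"
proof (rule ccontr)
  assume "\<sigma> True \<noteq> 1"
  have valid: "valid_strategy \<sigma>" and active: "0 < \<sigma> True \<or> 0 < \<sigma> False"
    and slack: "\<And>s. (\<sigma> s < 1 \<longrightarrow> invest_gain p B n \<sigma> s \<le> 0) \<and> (0 < \<sigma> s \<longrightarrow> 0 \<le> invest_gain p B n \<sigma> s)"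
    using eq sym_nontrivial_BNE_iff_slack[of p B n \<sigma>] p B by auto
  have bounds: "0 \<le> \<sigma> s" "\<sigma> s \<le> 1" for s using valid by (auto simp: valid_strategy_def)
  have "0 < (1-p) * \<sigma> True + p * \<sigma> False"
    using active p bounds by (auto intro: add_pos_nonneg add_nonneg_pos)
  then have "0 < others_reach_prob p B n \<sigma> False"
    unfolding others_reach_prob_def using invest_prob_bounds[OF valid, of p False] p B
    by (intro binom_tail_pos) (auto simp: invest_prob_L)
  moreover have "0 \<le> others_reach_prob p B n \<sigma> True"
    unfolding others_reach_prob_def using invest_prob_bounds[OF valid, of p True] p
    by (intro binom_tail_nonneg) auto
  ultimately have reach: "0 < (2*p - 1)/2 * others_reach_prob p B n \<sigma> False"
    and "0 < (2*p - 1)/2 * (others_reach_prob p B n \<sigma> True + others_reach_prob p B n \<sigma> False)"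
    using p by simp_all
  moreover have "invest_gain p B n \<sigma> True \<le> 0"
    using slack[of True] bounds[of True] \<open>\<sigma> True \<noteq> 1\<close> by simp
  ultimately have "invest_gain p B n \<sigma> False < 0" using invest_gain_H_minus_L[of p B n \<sigma>] by linarith
  then have "\<sigma> False = 0" using slack[of False] bounds[of False] by force
  then have "(2*p - 1)/2 * others_reach_prob p B n \<sigma> False \<le> invest_gain p B n \<sigma> True"
    using bounds p B by (intro invest_gain_H_ge[OF valid]) auto
  then show False using reach \<open>invest_gain p B n \<sigma> True \<le> 0\<close> by linarith
qed

lemma invest_gain_L_eq_low_gain:
  "\<sigma> True = 1 \<Longrightarrow> invest_gain p B n \<sigma> False = 1/2 * low_gain p (n-1) (B-1) (\<sigma> False)"
  unfolding invest_gain_def others_reach_prob_def low_gain_def signal_prob_def invest_prob_H invest_prob_L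
  by simp

lemma sym_nontrivial_BNE_iff_low_gain:
  assumes p: "1/2 < p" "p < 1" and B: "1 \<le> B" "B \<le> n"
  shows "sym_nontrivial_BNE p B n \<sigma> \<longleftrightarrow> \<sigma> True = 1 \<and> 0 \<le> \<sigma> False \<and> \<sigma> False \<le> 1 \<and>
    (\<sigma> False < 1 \<longrightarrow> low_gain p (n-1) (B-1) (\<sigma> False) \<le> 0) \<and>
    (0 < \<sigma> False \<longrightarrow> 0 \<le> low_gain p (n-1) (B-1) (\<sigma> False))"
    (is "_ \<longleftrightarrow> ?low")
proof
  assume eq: "sym_nontrivial_BNE p B n \<sigma>"
  then have "\<sigma> True = 1" by (rule sym_nontrivial_BNE_invests_after_high[OF p B])
  with eq show ?low
    using sym_nontrivial_BNE_iff_slack[of p B n \<sigma>] p B invest_gain_L_eq_low_gain[of \<sigma> p B n]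
    by (auto simp: valid_strategy_def)
next
  assume low: ?low
  then have valid: "valid_strategy \<sigma>" unfolding valid_strategy_def by (simp add: all_bool_eq)
  have p0: "0 < p" using p by simp
  have "0 \<le> others_reach_prob p B n \<sigma> False"
    unfolding others_reach_prob_def using invest_prob_bounds[OF valid, of p False] p
    by (intro binom_tail_nonneg) auto
  then have "0 \<le> (2*p - 1)/2 * others_reach_prob p B n \<sigma> False" using p by simp
  also have "\<dots> \<le> invest_gain p B n \<sigma> True"
    using low p B by (intro invest_gain_H_ge[OF valid]) auto
  finally have "0 \<le> invest_gain p B n \<sigma> True" .
  then show "sym_nontrivial_BNE p B n \<sigma>"
    unfolding sym_nontrivial_BNE_iff_slack[OF p0 p(2) B] all_bool_eq
    using p low valid invest_gain_L_eq_low_gain[of \<sigma> p B n] by auto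
qed

lemma sym_eq_is_sym_nontrivial_BNE:
  assumes p: "1/2 < p" "p < 1" and B: "1 \<le> B" "B \<le> n"
  shows "sym_nontrivial_BNE p B n (sym_eq p B n)"
proof -
  have r: "B - 1 \<le> n - 1" using B by simp
  obtain y where "0 \<le> y \<and> y \<le> 1 \<and> (y < 1 \<longrightarrow> low_gain p (n-1) (B-1) y \<le> 0)
      \<and> (0 < y \<longrightarrow> 0 \<le> low_gain p (n-1) (B-1) y)"
    using low_gain_slack_exists[OF p(1) r] by blast
  then have exists: "sym_nontrivial_BNE p B n (\<lambda>s. if s then 1 else y)"
    by (simp add: sym_nontrivial_BNE_iff_low_gain[OF p B])
  have unique: "\<sigma>1 = \<sigma>2" if "sym_nontrivial_BNE p B n \<sigma>1" "sym_nontrivial_BNE p B n \<sigma>2" for \<sigma>1 \<sigma>2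
  proof -
    have "\<not> \<sigma>1 False < \<sigma>2 False" if "sym_nontrivial_BNE p B n \<sigma>1" "sym_nontrivial_BNE p B n \<sigma>2" for \<sigma>1 \<sigma>2
    proof
      assume lt: "\<sigma>1 False < \<sigma>2 False"
      have "0 \<le> \<sigma>1 False" "\<sigma>2 False \<le> 1"
        using that unfolding sym_nontrivial_BNE_iff_low_gain[OF p B] by auto
      moreover from this have "low_gain p (n-1) (B-1) (\<sigma>1 False) \<le> 0" "0 \<le> low_gain p (n-1) (B-1) (\<sigma>2 False)"
        using that lt unfolding sym_nontrivial_BNE_iff_low_gain[OF p B] by auto
      ultimately show False using low_gain_single_crossing[OF p r _ lt] by blast
    qed
    then have "\<sigma>1 False = \<sigma>2 False" using that by (meson linorder_neqE)
    moreover have "\<sigma>1 True = \<sigma>2 True" using that by (simp add: sym_nontrivial_BNE_iff_low_gain[OF p B])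
    ultimately show ?thesis by (simp add: fun_eq_iff all_bool_eq)
  qed
  have "sym_nontrivial_BNE p B n (THE \<sigma>. sym_nontrivial_BNE p B n \<sigma>)"
    by (rule theI[where P="sym_nontrivial_BNE p B n", OF exists unique[OF _ exists]])
  then show ?thesis unfolding sym_eq_def sym_nontrivial_BNE_def by simp
qed

lemma sym_eq_low_gain:
  assumes p: "1/2 < p" "p < 1" and B: "1 \<le> B" "B \<le> n"
  defines "y \<equiv> sym_eq p B n False"
  shows "sym_eq p B n True = 1" "0 \<le> y" "y \<le> 1"
    "y < 1 \<Longrightarrow> low_gain p (n-1) (B-1) y \<le> 0" "0 < y \<Longrightarrow> 0 \<le> low_gain p (n-1) (B-1) y"
  using sym_eq_is_sym_nontrivial_BNE[OF p B] unfolding sym_nontrivial_BNE_iff_low_gain[OF p B] y_def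
  by auto

section \<open>Market penetration\<close>

lemma expect_penetration:
  assumes "0 < n" "1 \<le> B"
  shows "expect p n (\<lambda>_. \<sigma>) (\<lambda>w s a. real (num_act n a) / real n * (if B \<le> num_act n a then 1 else 0))
       = 1/2 * (invest_prob p \<sigma> True * others_reach_prob p B n \<sigma> True
                + invest_prob p \<sigma> False * others_reach_prob p B n \<sigma> False)"
proof -
  obtain m where n: "n = Suc m" using assms by (cases n) auto
  have "binom_expect n q (\<lambda>k. real k / real n * (if B \<le> k then 1 else 0)) = q * binom_tail (n-1) (B-1) q"
    for q
  proof -
    have "binom_expect n q (\<lambda>k. real k / real n * (if B \<le> k then 1 else 0))
        = binom_expect (Suc m) q (\<lambda>k. real k * ((if B \<le> k then 1 else 0) / real n))"
      using n by (simp add: mult.commute)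
    also have "\<dots> = real n * q * binom_expect m q (\<lambda>k. (1 / real n) * (if B - 1 \<le> k then 1 else 0))"
      unfolding binom_expect_times_index n using assms(2) by (intro arg_cong2[where f=times] binom_expect_cong) auto
    also have "\<dots> = q * binom_expect m q (\<lambda>k. if B - 1 \<le> k then 1 else 0)"
      unfolding binom_expect_cmult using n by simp
    finally show ?thesis using n by (simp add: binom_expect_indicator_ge)
  qed
  then show ?thesis
    unfolding expect_symmetric_count[where h="\<lambda>k. real k / real n * (if B \<le> k then 1 else 0)"]
    by (simp add: others_reach_prob_def)
qed

lemma R_sym_eq:
  assumes p: "1/2 < p" "p < 1" and B: "1 \<le> B" "B \<le> n"
  defines "y \<equiv> sym_eq p B n False"
  shows "R p B n = 1/2 * ((p + (1-p)*y) * binom_tail (n-1) (B-1) (p + (1-p)*y)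
                          + ((1-p) + p*y) * binom_tail (n-1) (B-1) ((1-p) + p*y))"
  using expect_penetration[of n B p "sym_eq p B n"] sym_eq_low_gain(1)[OF p B] B
  unfolding R_def y_def others_reach_prob_def invest_prob_H invest_prob_L by simp

text \<open>At an interior equilibrium the indifference condition \<open>low_gain = 0\<close> eliminates the
  low-state tail.\<close>
lemma R_sym_eq_interior:
  assumes p: "1/2 < p" "p < 1" and B: "1 \<le> B" "B \<le> n"
  defines "y \<equiv> sym_eq p B n False"
  assumes "0 < y"
  shows "R p B n = binom_tail (n-1) (B-1) (p + (1-p)*y) * (1 - 2*p*(1-p)*(1-y)) / (2*p)"
proof -
  define q1 q0 where "q1 = p + (1-p)*y" and "q0 = (1-p) + p*y"
  define T1 T0 where "T1 = binom_tail (n-1) (B-1) q1" and "T0 = binom_tail (n-1) (B-1) q0"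
  have "y \<noteq> 1"
    using sym_eq_low_gain(5)[OF p B] low_gain_at_1[of "B-1" "n-1" p] assms unfolding y_def by auto
  then have "low_gain p (n-1) (B-1) y = 0"
    using sym_eq_low_gain(3-5)[OF p B] assms unfolding y_def by fastforce
  then have indifferent: "p * T0 = (1-p) * T1"
    unfolding low_gain_def T1_def T0_def q1_def q0_def by simp
  have "2*p * R p B n = p * (q1 * T1) + q0 * (p * T0)"
    unfolding R_sym_eq[OF p B, folded y_def] q1_def q0_def T1_def T0_def by (simp add: algebra_simps)
  also have "\<dots> = T1 * (p * q1 + (1-p) * q0)"
    unfolding indifferent by (simp add: algebra_simps)
  also have "p * q1 + (1-p) * q0 = 1 - 2*p*(1-p)*(1-y)"
    unfolding q1_def q0_def by (simp add: algebra_simps)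
  finally show ?thesis using p unfolding T1_def q1_def by (simp add: field_simps)
qed

lemma penetration_factor_bounds:
  fixes p y :: real
  assumes "0 \<le> p" "p \<le> 1" "0 \<le> y" "y \<le> 1"
  shows "0 \<le> 1 - 2*p*(1-p)*(1-y)" "1 - 2*p*(1-p)*(1-y) \<le> 1"
proof -
  have "0 \<le> (2*p - 1)^2" by simp
  then have "2*p*(1-p) \<le> 1/2" by (simp add: power2_eq_square algebra_simps)
  moreover have "2*p*(1-p)*(1-y) \<le> 2*p*(1-p)" "0 \<le> 2*p*(1-p)*(1-y)"
    using assms mult_left_le[of "1-y" "2*p*(1-p)"] by simp_all
  ultimately show "0 \<le> 1 - 2*p*(1-p)*(1-y)" "1 - 2*p*(1-p)*(1-y) \<le> 1" by linarith+
qed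

lemma R_le:
  assumes p: "1/2 < p" "p < 1" and B: "1 \<le> B" "B \<le> n"
  shows "R p B n \<le> 1 / (2*p)"
proof -
  define y where "y = sym_eq p B n False"
  have y: "0 \<le> y" "y \<le> 1" using sym_eq_low_gain(2,3)[OF p B] unfolding y_def by auto
  have q: "0 \<le> p + (1-p)*y" "p + (1-p)*y \<le> 1" "0 \<le> (1-p) + p*y" "(1-p) + p*y \<le> 1"
    using p y mix_in_unit_interval[of p y] mix_in_unit_interval[of "1-p" y] by simp_all
  have r: "B - 1 \<le> Suc (n-1)" using B by simp
  define T1 T0 where "T1 = binom_tail (n-1) (B-1) (p + (1-p)*y)" and "T0 = binom_tail (n-1) (B-1) ((1-p) + p*y)"
  have T: "0 \<le> T1" "T1 \<le> 1" "0 \<le> T0" "T0 \<le> 1"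
    unfolding T1_def T0_def using q r by (auto intro: binom_tail_nonneg binom_tail_le_1)
  show ?thesis
  proof (cases "y = 0")
    case True
    have "R p B n = 1/2 * (p * T1 + (1-p) * T0)"
      using R_sym_eq[OF p B] True unfolding y_def T1_def T0_def by simp
    also have "\<dots> \<le> 1/2 * (p * 1 + (1-p) * 1)"
      using T p by (intro mult_left_mono add_mono) auto
    also have "\<dots> \<le> 1 / (2*p)" using p by (simp add: field_simps)
    finally show ?thesis .
  next
    case False
    have "R p B n = T1 * (1 - 2*p*(1-p)*(1-y)) / (2*p)"
      using R_sym_eq_interior[OF p B] False y unfolding y_def T1_def by simp
    also have "\<dots> \<le> 1 * 1 / (2*p)"
      using T p penetration_factor_bounds[of p y] y by (intro divide_right_mono mult_mono) auto
    finally show ?thesis by simp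
  qed
qed

lemma sym_eq_low_gt_of_low_gain_pos:
  assumes p: "1/2 < p" "p < 1" and B: "1 \<le> B" "B \<le> n"
    and y0: "0 \<le> y0" "y0 < 1" and gain: "0 < low_gain p (n-1) (B-1) y0"
  shows "y0 < sym_eq p B n False"
proof (rule ccontr)
  have r: "B - 1 \<le> n - 1" using B by simp
  assume "\<not> y0 < sym_eq p B n False"
  then have le: "sym_eq p B n False \<le> y0" by simp
  then have "low_gain p (n-1) (B-1) (sym_eq p B n False) \<le> 0"
    using sym_eq_low_gain(4)[OF p B] y0 by simp
  moreover have "sym_eq p B n False \<noteq> y0" using calculation gain by auto
  ultimately show False
    using low_gain_single_crossing[OF p r, of "sym_eq p B n False" y0] sym_eq_low_gain(2)[OF p B]
      le gain less_imp_le[OF y0(2)] by simp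
qed

lemma R_ge_of_low_gain_pos:
  assumes p: "1/2 < p" "p < 1" and B: "1 \<le> B" "B \<le> n"
    and y0: "0 \<le> y0" "y0 < 1" and gain: "0 < low_gain p (n-1) (B-1) y0"
  shows "binom_tail (n-1) (B-1) (p + (1-p)*y0) * (1 - 2*p*(1-p)*(1-y0)) / (2*p) \<le> R p B n"
proof -
  define y where "y = sym_eq p B n False"
  have "y0 < y" "y \<le> 1" using sym_eq_low_gt_of_low_gain_pos[OF assms] sym_eq_low_gain(3)[OF p B] unfolding y_def by auto
  have "0 \<le> 1 - 2*p*(1-p)*(1-y0)" using penetration_factor_bounds[of p y0] p y0 by simp
  moreover have "binom_tail (n-1) (B-1) (p + (1-p)*y0) \<le> binom_tail (n-1) (B-1) (p + (1-p)*y)"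
    using B p y0 \<open>y0 < y\<close> \<open>y \<le> 1\<close> mix_in_unit_interval[of p y0] mix_in_unit_interval[of p y]
    by (intro binom_tail_mono) auto
  moreover have "1 - 2*p*(1-p)*(1-y0) \<le> 1 - 2*p*(1-p)*(1-y)" using \<open>y0 < y\<close> p by simp
  moreover have "0 \<le> binom_tail (n-1) (B-1) (p + (1-p)*y0)"
    using p y0 mix_in_unit_interval[of p y0] by (intro binom_tail_nonneg) auto
  ultimately have "binom_tail (n-1) (B-1) (p + (1-p)*y0) * (1 - 2*p*(1-p)*(1-y0))
      \<le> binom_tail (n-1) (B-1) (p + (1-p)*y) * (1 - 2*p*(1-p)*(1-y))"
    by (intro mult_mono) auto
  then show ?thesis
    using R_sym_eq_interior[OF p B] \<open>y0 < y\<close> y0 p unfolding y_def by (simp add: divide_right_mono)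
qed

definition cutoff_bound :: "real \<Rightarrow> nat \<Rightarrow> nat \<Rightarrow> real" where
  "cutoff_bound p K m =
     (1 - 2*(1-p)/(2*p-1)^2 / real K) * (1 - 4*p*(1-p) * (real K / real m)) / (2*p)"

text \<open>For the threshold \<open>B = m + 1 - K\<close>, Chebyshev's inequality shows that investing after a
  low signal is still strictly profitable when low-signal players invest with probability
  \<open>1 - 2K/m\<close>; so the equilibrium probability is larger, and both investment probabilities are
  within \<open>O(K/m)\<close> of 1.\<close>
lemma low_gain_pos_at_cutoff:
  assumes p: "1/2 < p" "p < 1" and K: "1 \<le> K" "2*K \<le> m"
    and large: "p * (2*p/(2*p-1)^2) < (1-p) * (real K - 2*(1-p)/(2*p-1)^2)"
  shows "0 < low_gain p m (m-K) (1 - 2*real K/real m)"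
proof -
  define y0 where "y0 = 1 - 2*real K/real m"
  define a c where "a = 2*(1-p)/(2*p-1)^2 / real K" and "c = 2*p/(2*p-1)^2 / real K"
  have qH: "p + (1-p)*y0 = 1 - 2*(1-p)*real K/real m" and qL: "(1-p) + p*y0 = 1 - 2*p*real K/real m"
    unfolding y0_def by (simp_all add: algebra_simps)
  have "(1 - 2*(1-p))^2 = (2*p - 1)^2" by (simp add: power2_eq_square algebra_simps)
  then have T1: "1 - a \<le> binom_tail m (m-K) (p + (1-p)*y0)"
    unfolding qH a_def using binom_tail_near_1_ge[of "1-p" K m] p K by simp
  have T0: "binom_tail m (m-K) ((1-p) + p*y0) \<le> c"
    unfolding qL c_def using binom_tail_near_1_le[of p K m] p K by simp
  have "p * c = p * (2*p/(2*p-1)^2) / real K" unfolding c_def by simp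
  also have "\<dots> < (1-p) * (real K - 2*(1-p)/(2*p-1)^2) / real K"
    using large K by (intro divide_strict_right_mono) auto
  also have "\<dots> = (1-p) * (1 - a)"
  proof -
    have "(1-p) * (k - \<alpha>) / k = (1-p) * (1 - \<alpha> / k)" if "k \<noteq> 0" for k \<alpha> :: real
      using that by (simp add: field_simps)
    then show ?thesis unfolding a_def using K by simp
  qed
  also have "\<dots> \<le> (1-p) * binom_tail m (m-K) (p + (1-p)*y0)" using T1 p by simp
  finally show ?thesis
    unfolding low_gain_def y0_def[symmetric] using p mult_left_mono[OF T0, of p] by linarith
qed

lemma R_ge_cutoff_bound:
  assumes p: "1/2 < p" "p < 1" and K: "1 \<le> K" "2*K \<le> m"
    and large: "p * (2*p/(2*p-1)^2) < (1-p) * (real K - 2*(1-p)/(2*p-1)^2)"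
  shows "cutoff_bound p K m \<le> R p (Suc m - K) (Suc m)"
proof -
  define y0 where "y0 = 1 - 2*real K/real m"
  have "0 < real m" "2*real K \<le> real m" using K by simp_all
  then have y0: "0 \<le> y0" "y0 < 1" using K unfolding y0_def by (simp_all add: field_simps)
  have B: "1 \<le> Suc m - K" "Suc m - K \<le> Suc m" and idx: "Suc m - 1 = m" "Suc m - K - 1 = m - K"
    using K by auto
  have "p + (1-p)*y0 = 1 - 2*(1-p)*real K/real m" unfolding y0_def by (simp add: algebra_simps)
  moreover have "(1 - 2*(1-p))^2 = (2*p - 1)^2" by (simp add: power2_eq_square algebra_simps)
  ultimately have T1: "1 - 2*(1-p)/(2*p-1)^2 / real K \<le> binom_tail m (m-K) (p + (1-p)*y0)"
    using binom_tail_near_1_ge[of "1-p" K m] p K by simp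
  have "cutoff_bound p K m = (1 - 2*(1-p)/(2*p-1)^2 / real K) * (1 - 2*p*(1-p)*(1-y0)) / (2*p)"
    unfolding cutoff_bound_def y0_def by (simp add: algebra_simps)
  also have "\<dots> \<le> binom_tail m (m-K) (p + (1-p)*y0) * (1 - 2*p*(1-p)*(1-y0)) / (2*p)"
    using T1 penetration_factor_bounds[of p y0] p y0 by (intro divide_right_mono mult_right_mono) auto
  also have "\<dots> \<le> R p (Suc m - K) (Suc m)"
    using R_ge_of_low_gain_pos[OF p B y0] low_gain_pos_at_cutoff[OF p K large] by (simp add: idx y0_def)
  finally show ?thesis .
qed

lemma floor_sqrt_asymptotics:
  "filterlim (\<lambda>m. real (nat \<lfloor>sqrt (real m)\<rfloor>)) at_top sequentially"
  "(\<lambda>m. real (nat \<lfloor>sqrt (real m)\<rfloor>) / real m) \<longlonglongrightarrow> 0"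
proof -
  have floor_eq: "real (nat \<lfloor>sqrt (real m)\<rfloor>) = of_int \<lfloor>sqrt (real m)\<rfloor>" for m by simp
  have bounds: "sqrt (real m) - 1 \<le> real (nat \<lfloor>sqrt (real m)\<rfloor>)" "real (nat \<lfloor>sqrt (real m)\<rfloor>) \<le> sqrt (real m)" for m
    using floor_eq[of m] by linarith+
  show "filterlim (\<lambda>m. real (nat \<lfloor>sqrt (real m)\<rfloor>)) at_top sequentially"
    by (rule filterlim_at_top_mono[of "\<lambda>m. sqrt (real m) - 1"]) (use bounds in \<open>auto, real_asymp\<close>)
  show "(\<lambda>m. real (nat \<lfloor>sqrt (real m)\<rfloor>) / real m) \<longlonglongrightarrow> 0"
  proof (rule tendsto_sandwich[of "\<lambda>_. 0" _ _ "\<lambda>m. sqrt (real m) / real m"])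
    show "\<forall>\<^sub>F m in sequentially. real (nat \<lfloor>sqrt (real m)\<rfloor>) / real m \<le> sqrt (real m) / real m"
      using bounds by (intro always_eventually allI divide_right_mono) auto
  qed (auto, real_asymp)
qed

lemma cutoff_bound_tendsto:
  assumes "0 < p" "filterlim (\<lambda>m. real (K m)) at_top sequentially" "(\<lambda>m. real (K m) / real m) \<longlonglongrightarrow> 0"
  shows "(\<lambda>m. cutoff_bound p (K m) m) \<longlonglongrightarrow> 1 / (2*p)"
proof -
  have "(\<lambda>m. 2*(1-p)/(2*p-1)^2 / real (K m)) \<longlonglongrightarrow> 0"
    using assms(2) by (intro tendsto_divide_0[OF tendsto_const] filterlim_at_top_imp_at_infinity)
  then have "(\<lambda>m. cutoff_bound p (K m) m) \<longlonglongrightarrow> (1 - 0) * (1 - 4*p*(1-p) * 0) / (2*p)"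
    unfolding cutoff_bound_def using assms(1) by (intro tendsto_intros assms(3)) simp_all
  then show ?thesis by simp
qed

lemma Max_R_le:
  assumes "1/2 < p" "p < 1" "1 \<le> n"
  shows "Max ((\<lambda>B. R p B n) ` {1..n}) \<le> 1 / (2*p)"
  using assms R_le by (intro Max.boundedI) auto

lemma Max_R_ge_cutoff_bound_eventually:
  assumes p: "1/2 < p" "p < 1"
    and K: "filterlim (\<lambda>m. real (K m)) at_top sequentially" "(\<lambda>m. real (K m) / real m) \<longlonglongrightarrow> 0"
  shows "\<forall>\<^sub>F m in sequentially. cutoff_bound p (K m) m \<le> Max ((\<lambda>B. R p B (Suc m)) ` {1..Suc m})"
proof -
  define \<alpha> \<gamma> where "\<alpha> = 2*(1-p)/(2*p-1)^2" and "\<gamma> = 2*p/(2*p-1)^2"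
  have large: "p * \<gamma> < (1-p) * (k - \<alpha>)" if "\<alpha> + p * \<gamma> / (1-p) < k" for k
  proof -
    have "p * \<gamma> / (1-p) < k - \<alpha>" using that by simp
    then show ?thesis using p by (simp add: pos_divide_less_eq mult.commute)
  qed
  have "\<forall>\<^sub>F m in sequentially. real (K m) > max 1 (\<alpha> + p * \<gamma> / (1-p))"
    using K(1) unfolding filterlim_at_top_dense by blast
  moreover have "\<forall>\<^sub>F m in sequentially. real (K m) / real m < 1/2"
    using K(2) by (rule order_tendstoD) simp
  moreover have "\<forall>\<^sub>F m in sequentially. 1 \<le> m" by (rule eventually_ge_at_top)
  ultimately show ?thesis
  proof eventually_elim
    case (elim m)
    then have "1 \<le> K m" "2 * K m \<le> m" by (simp_all add: field_simps)
    moreover have "p * (2*p/(2*p-1)^2) < (1-p) * (real (K m) - 2*(1-p)/(2*p-1)^2)"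
      using large elim unfolding \<alpha>_def \<gamma>_def by simp
    ultimately have "cutoff_bound p (K m) m \<le> R p (Suc m - K m) (Suc m)"
      by (rule R_ge_cutoff_bound[OF p])
    also have "\<dots> \<le> Max ((\<lambda>B. R p B (Suc m)) ` {1..Suc m})"
      using \<open>2 * K m \<le> m\<close> by (intro Max_ge imageI) auto
    finally show ?case .
  qed
qed

theorem theorem3:
  fixes p :: real
  assumes "1/2 < p" and "p < 1"
  shows "(\<lambda>n. Max ((\<lambda>B. R p B n) ` {1..n})) \<longlonglongrightarrow> 1 / (2 * p)"
proof -
  define K where "K m = nat \<lfloor>sqrt (real m)\<rfloor>" for m
  note K = floor_sqrt_asymptotics[folded K_def]
  have "(\<lambda>m. Max ((\<lambda>B. R p B (Suc m)) ` {1..Suc m})) \<longlonglongrightarrow> 1 / (2 * p)"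
  proof (rule tendsto_sandwich)
    show "\<forall>\<^sub>F m in sequentially. cutoff_bound p (K m) m \<le> Max ((\<lambda>B. R p B (Suc m)) ` {1..Suc m})"
      using Max_R_ge_cutoff_bound_eventually[OF assms K] .
    show "\<forall>\<^sub>F m in sequentially. Max ((\<lambda>B. R p B (Suc m)) ` {1..Suc m}) \<le> 1 / (2 * p)"
      using Max_R_le[OF assms] by simp
  qed (use cutoff_bound_tendsto[OF _ K] assms in auto)
  then show ?thesis by (rule LIMSEQ_imp_Suc)
qed

end
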